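(* Let $n\in\mathbb{N}$, $a<b$, let $Z=\{z_i:i\in\mathbb{Z}\}$ be $n$-close on $(a,b)$, and let $F:[a,b]\to\mathbb{R}$ be zig-zag of order $n$ with respect to $Z$ on $[a,b]$. Then $$|F(z_i)-F(z_{i+1})|\ge 2^n|z_i-z_{i+1}|\quad\text{for all } i.$$ Furthermore, let $\mathcal{F}=\{[z_i,z_{i+1}]:i\in\mathbb{Z}\}$, and let $U=\bigsqcup_{i\in J}(a_i,b_i)\subset(a,b)$ be an open set (written as the disjoint union of its components) which is trim on $\mathcal{F}$. Let $G:[a,b]\to\mathbb{R}$ satisfy $G(a)=G(b)=F(a)$ and $G|_{[z_i,z_{i+1}]}=g(F,[z_i,z_{i+1}],U)$ for all $i\in\mathbb{Z}$. Define $H(x)=G(x)+\sum_{i\in J}\Phi_{n,[a_i,b_i]}(x)$ for $x\in[a,b]$. Then $$H(x)\le G(a)+2\,\Phi_{n,[a,b]}(x)\quad\text{for all } x\in[a,b].$$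
   Context: $|\cdot|$ denotes Lebesgue measure. For a closed interval $I=[a,b]$ and $n\in\mathbb{N}$, $\Phi_{n,I}(x)=2^{-n}\min\{x-a,b-x\}$ if $x\in[a,b]$ and $\Phi_{n,I}(x)=0$ otherwise. A set $Z=\{z_j:j\in\mathbb{Z}\}$ is $n$-close on $(a,b)$ if $a<z_j<z_{j+1}<b$ for all $j\in\mathbb{Z}$, $z_j\to b$ as $j\to\infty$, $z_j\to a$ as $j\to-\infty$, and $z_{j+1}-z_j<4^{-n}\min\{z_j-a,\,b-z_{j+1}\}$ for all $j\in\mathbb{Z}$. If $Z$ is $n$-close on $(a,b)$, a function $F:[a,b]\to\mathbb{R}$ is zig-zag of order $n$ with respect to $Z$ on $[a,b]$ if $F(a)=F(b)$, $F(z_j)=F(a)$ for even $j$, $F(z_j)=F(a)+\Phi_{n,[a,b]}(z_j)$ for odd $j$, and $F$ is linear (affine) on $[z_j,z_{j+1}]$ for every $j\in\mathbb{Z}$. An open set $U$ is trim in a closed interval $[c,d]$ if $|U\cap[c,d]|<d-c$ and $c,d\notin U$; $U$ is trim on a collection $\mathcal{F}$ of pairwise non-overlapping closed intervals if it is trim in each interval of $\mathcal{F}$. For $f$ linear on $[c,d]$ and $U$ trim in $[c,d]$, $g(f,[c,d],U)$ is the function on $[c,d]$ given by $g(x)=f(c)+\frac{|([c,d]\setminus U)\cap[c,x]|}{|[c,d]\setminus U|}(f(d)-f(c))$. *)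

theory Defs
  imports "HOL-Analysis.Analysis"
begin

definition Phi :: "nat \<Rightarrow> real \<Rightarrow> real \<Rightarrow> real \<Rightarrow> real" where
  "Phi n c d x = (if x \<in> {c..d} then (1/2)^n * min (x - c) (d - x) else 0)"

definition n_close :: "nat \<Rightarrow> (int \<Rightarrow> real) \<Rightarrow> real \<Rightarrow> real \<Rightarrow> bool" where
  "n_close n z a b \<longleftrightarrow>
     (\<forall>j. a < z j \<and> z j < z (j+1) \<and> z (j+1) < b) \<and>
     (z \<longlongrightarrow> b) at_top \<and> (z \<longlongrightarrow> a) at_bot \<and>
     (\<forall>j. z (j+1) - z j < (1/4)^n * min (z j - a) (b - z (j+1)))"

definition affine_on_ivl :: "(real \<Rightarrow> real) \<Rightarrow> real \<Rightarrow> real \<Rightarrow> bool" where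
  "affine_on_ivl f c d \<longleftrightarrow> (\<exists>m k. \<forall>x\<in>{c..d}. f x = m * x + k)"

definition zigzag :: "nat \<Rightarrow> (int \<Rightarrow> real) \<Rightarrow> real \<Rightarrow> real \<Rightarrow> (real \<Rightarrow> real) \<Rightarrow> bool" where
  "zigzag n z a b F \<longleftrightarrow>
     F a = F b \<and>
     (\<forall>j. even j \<longrightarrow> F (z j) = F a) \<and>
     (\<forall>j. odd j \<longrightarrow> F (z j) = F a + Phi n a b (z j)) \<and>
     (\<forall>j. affine_on_ivl F (z j) (z (j+1)))"

definition trim_in :: "real set \<Rightarrow> real \<Rightarrow> real \<Rightarrow> bool" where
  "trim_in U c d \<longleftrightarrow> measure lebesgue (U \<inter> {c..d}) < d - c \<and> c \<notin> U \<and> d \<notin> U"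

definition gfun :: "(real \<Rightarrow> real) \<Rightarrow> real \<Rightarrow> real \<Rightarrow> real set \<Rightarrow> real \<Rightarrow> real" where
  "gfun f c d U x = f c + measure lebesgue (({c..d} - U) \<inter> {c..x}) / measure lebesgue ({c..d} - U) * (f d - f c)"

end

theory Submission
  imports Defs
begin

text \<open>
  On each step [z i, z (i+1)] the zig-zag F runs between F a and F a + Phi(z j) for an odd
  j \<in> {i, i+1}; as the step is shorter than 4^{-n} times the distance to the endpoints,
  Phi(z j) \<ge> 2^n |z (i+1) - z i|, which gives the slope bound. For the second claim fix x in a
  step. G x is a convex combination of F (z i) and F (z (i+1)), hence at most
  F a + Phi(z j) \<le> F a + Phi x + 2^{-n} |x - z j|. Trimness keeps z i and z (i+1) outside U,
  so the component of U containing x lies inside the step and its bump at x is at most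
  2^{-n} min (x - z i) (z (i+1) - x). The two error terms add up to at most 2^{-n} times the step
  length, which is at most Phi x.
\<close>

lemma Phi_nonneg: "0 \<le> Phi n c d x"
  by (simp add: Phi_def)

lemma Phi_eq_0_outside: "x \<notin> {c<..<d} \<Longrightarrow> Phi n c d x = 0"
  by (auto simp: Phi_def min_def)

lemma Phi_inside: "x \<in> {c..d} \<Longrightarrow> Phi n c d x = (1/2)^n * min (x - c) (d - x)"
  by (simp add: Phi_def)

lemma Phi_Lipschitz:
  assumes "x \<in> {c..d}" "y \<in> {c..d}"
  shows "Phi n c d y \<le> Phi n c d x + (1/2)^n * \<bar>x - y\<bar>"
proof -
  have "min (y - c) (d - y) \<le> min (x - c) (d - x) + \<bar>x - y\<bar>" by auto
  then have "(1/2)^n * min (y - c) (d - y) \<le> (1/2)^n * (min (x - c) (d - x) + \<bar>x - y\<bar>)"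
    by (intro mult_left_mono) auto
  then show ?thesis using assms by (simp add: Phi_inside algebra_simps)
qed

lemma infsum_eq_single:
  assumes "k \<in> J" "\<And>i. i \<in> J \<Longrightarrow> i \<noteq> k \<Longrightarrow> f i = 0"
  shows "infsum f J = (f k :: real)"
proof -
  have "infsum f J = infsum f {k}" by (rule infsum_cong_neutral) (use assms in auto)
  then show ?thesis by simp
qed

lemma infsum_Phi_components_le:
  fixes aa bb :: "'j \<Rightarrow> real"
  assumes U: "U = (\<Union>i\<in>J. {aa i<..<bb i})"
    and disj: "\<And>i k. i \<in> J \<Longrightarrow> k \<in> J \<Longrightarrow> i \<noteq> k \<Longrightarrow> {aa i<..<bb i} \<inter> {aa k<..<bb k} = {}"
    and x: "x \<in> {c..d}" and "c \<notin> U" "d \<notin> U"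
  shows "(\<Sum>\<^sub>\<infinity>i\<in>J. Phi n (aa i) (bb i) x) \<le> (1/2)^n * min (x - c) (d - x)"
proof (cases "\<exists>k\<in>J. x \<in> {aa k<..<bb k}")
  case True
  then obtain k where k: "k \<in> J" "x \<in> {aa k<..<bb k}" by blast
  have "x \<notin> {aa i<..<bb i}" if "i \<in> J" "i \<noteq> k" for i
    using disj[OF that(1) k(1) that(2)] k(2) by blast
  then have "(\<Sum>\<^sub>\<infinity>i\<in>J. Phi n (aa i) (bb i) x) = Phi n (aa k) (bb k) x"
    using k(1) by (intro infsum_eq_single Phi_eq_0_outside)
  moreover have "c \<le> aa k" "bb k \<le> d"
    using k x \<open>c \<notin> U\<close> \<open>d \<notin> U\<close> unfolding U by (auto simp: not_le)
  ultimately show ?thesis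
    using k by (auto simp: Phi_def intro!: mult_left_mono)
next
  case False
  then have "(\<Sum>\<^sub>\<infinity>i\<in>J. Phi n (aa i) (bb i) x) = 0"
    by (intro infsum_0 Phi_eq_0_outside) auto
  then show ?thesis using x by simp
qed

lemma n_close_ordered: "n_close n z a b \<Longrightarrow> a < z i \<and> z i < z (i + 1) \<and> z (i + 1) < b"
  by (simp add: n_close_def)

lemma n_close_step_bound:
  assumes "n_close n z a b"
  shows "4^n * (z (i + 1) - z i) < min (z i - a) (b - z (i + 1))"
proof -
  have "4^n * (z (i + 1) - z i) < 4^n * ((1/4)^n * min (z i - a) (b - z (i + 1)))"
    using assms by (intro mult_strict_left_mono) (auto simp: n_close_def)
  also have "\<dots> = min (z i - a) (b - z (i + 1))"
    by (simp add: mult.assoc[symmetric] power_mult_distrib[symmetric])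
  finally show ?thesis .
qed

lemma n_close_step_le_Phi:
  assumes "n_close n z a b" "j \<in> {i, i + 1}"
  shows "2^n * (z (i + 1) - z i) \<le> Phi n a b (z j)"
proof -
  have "2^n * (z (i + 1) - z i) = (1/2)^n * (4^n * (z (i + 1) - z i))"
    by (simp add: mult.assoc[symmetric] power_mult_distrib[symmetric])
  also have "\<dots> \<le> (1/2)^n * min (z j - a) (b - z j)"
    using n_close_step_bound[OF assms(1), of i] n_close_ordered[OF assms(1), of i] assms(2)
    by (intro mult_left_mono) auto
  finally show ?thesis
    using n_close_ordered[OF assms(1), of j] by (simp add: Phi_inside)
qed

lemma n_close_step_le_Phi_within:
  assumes "n_close n z a b" "x \<in> {z i..z (i + 1)}"
  shows "(1/2)^n * (z (i + 1) - z i) \<le> Phi n a b x"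
proof -
  have "1 * (z (i + 1) - z i) \<le> 4^n * (z (i + 1) - z i)"
    using n_close_ordered[OF assms(1), of i] by (intro mult_right_mono) auto
  then have "z (i + 1) - z i \<le> min (x - a) (b - x)"
    using n_close_step_bound[OF assms(1), of i] assms(2) by auto
  moreover have "x \<in> {a..b}"
    using n_close_ordered[OF assms(1), of i] assms(2) by auto
  ultimately show ?thesis by (simp add: Phi_inside)
qed

lemma n_close_covers:
  assumes "n_close n z a b" "x \<in> {a<..<b}"
  obtains i where "x \<in> {z i..<z (i + 1)}"
proof -
  obtain N where N: "z N < x"
    using order_tendstoD(2)[of z a at_bot x] assms by (auto simp: n_close_def dest: eventually_happens)
  obtain M where M: "\<And>k. k \<ge> M \<Longrightarrow> x < z k"
    using order_tendstoD(1)[of z b at_top x] assms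
    by (auto simp: n_close_def eventually_at_top_linorder)
  have "\<exists>i. x \<in> {z i..<z (i + 1)}" if "z j \<le> x" "x < z (j + int m)" for j m
    using that
  proof (induction m)
    case (Suc m)
    then show ?case
      by (cases "z (j + int m) \<le> x") (auto simp: ac_simps)
  qed simp
  moreover have "x < z (N + int (nat (max M (N + 1) - N)))"
    using M by simp
  ultimately show ?thesis
    using N that less_imp_le by blast
qed

lemma zigzag_step_values:
  assumes "zigzag n z a b F"
  shows "\<exists>j\<in>{i, i + 1}. min (F (z i)) (F (z (i + 1))) = F a \<and>
                       max (F (z i)) (F (z (i + 1))) = F a + Phi n a b (z j)"
  using assms Phi_nonneg[of n a b]
  by (cases "even i") (auto simp: zigzag_def intro: bexI[of _ i] bexI[of _ "i + 1"])

lemma gfun_le_max: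
  fixes U :: "real set"
  assumes "open U" "x \<in> {c..d}"
  shows "gfun f c d U x \<le> max (f c) (f d)"
proof -
  define A where "A = measure lebesgue (({c..d} - U) \<inter> {c..x})"
  define B where "B = measure lebesgue ({c..d} - U)"
  define r where "r = A / B"
  have "({c..d} - U) \<in> lmeasurable"
    using assms by (intro bounded_set_imp_lmeasurable) (auto intro: bounded_subset[of "{c..d}"])
  then have "A \<le> B"
    unfolding A_def B_def using assms by (intro measure_mono_fmeasurable) auto
  moreover have "0 \<le> A" by (simp add: A_def)
  ultimately have r: "0 \<le> r" "r \<le> 1"
    unfolding r_def by (auto simp: divide_le_eq_1)
  have "f c + r * (f d - f c) = (1 - r) * f c + r * f d" by algebra
  also have "\<dots> \<le> (1 - r) * max (f c) (f d) + r * max (f c) (f d)"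
    using r by (intro add_mono mult_left_mono) auto
  finally show ?thesis by (simp add: gfun_def r_def A_def B_def algebra_simps)
qed

lemma zigzag_slope_bound:
  assumes "n_close n z a b" "zigzag n z a b F"
  shows "2^n * \<bar>z i - z (i + 1)\<bar> \<le> \<bar>F (z i) - F (z (i + 1))\<bar>"
proof -
  obtain j where j: "j \<in> {i, i + 1}" and
    "min (F (z i)) (F (z (i + 1))) = F a" "max (F (z i)) (F (z (i + 1))) = F a + Phi n a b (z j)"
    using zigzag_step_values[OF assms(2)] by blast
  then have "\<bar>F (z i) - F (z (i + 1))\<bar> = Phi n a b (z j)" by linarith
  then show ?thesis
    using n_close_step_le_Phi[OF assms(1) j] n_close_ordered[OF assms(1), of i] by simp
qed

lemma gfun_plus_bumps_le_twice_Phi: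
  fixes aa bb :: "'j \<Rightarrow> real"
  assumes close: "n_close n z a b" and zz: "zigzag n z a b F"
    and "open U" and U: "U = (\<Union>i\<in>J. {aa i<..<bb i})"
    and disj: "\<And>i k. i \<in> J \<Longrightarrow> k \<in> J \<Longrightarrow> i \<noteq> k \<Longrightarrow> {aa i<..<bb i} \<inter> {aa k<..<bb k} = {}"
    and trim: "\<And>i. trim_in U (z i) (z (i + 1))"
    and G: "\<And>i x. x \<in> {z i..z (i + 1)} \<Longrightarrow> G x = gfun F (z i) (z (i + 1)) U x"
    and x: "x \<in> {z i..z (i + 1)}"
  shows "G x + (\<Sum>\<^sub>\<infinity>k\<in>J. Phi n (aa k) (bb k) x) \<le> F a + 2 * Phi n a b x"
proof -
  obtain j where j: "j \<in> {i, i + 1}"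
    and Fmax: "max (F (z i)) (F (z (i + 1))) = F a + Phi n a b (z j)"
    using zigzag_step_values[OF zz] by blast
  have "z i \<notin> U" "z (i + 1) \<notin> U"
    using trim[of i] trim[of "i + 1"] by (auto simp: trim_in_def)
  then have bumps: "(\<Sum>\<^sub>\<infinity>k\<in>J. Phi n (aa k) (bb k) x) \<le> (1/2)^n * min (x - z i) (z (i + 1) - x)"
    using infsum_Phi_components_le[OF U disj x] by blast
  have "x \<in> {a..b}" "z j \<in> {a..b}"
    using x j n_close_ordered[OF close, of i] by auto
  then have Phi_zj: "Phi n a b (z j) \<le> Phi n a b x + (1/2)^n * \<bar>x - z j\<bar>"
    by (rule Phi_Lipschitz)
  have "(1/2)^n * \<bar>x - z j\<bar> + (1/2)^n * min (x - z i) (z (i + 1) - x) \<le> (1/2)^n * (z (i + 1) - z i)"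
    unfolding distrib_left[symmetric] using x j by (intro mult_left_mono) auto
  also have "\<dots> \<le> Phi n a b x"
    by (rule n_close_step_le_Phi_within[OF close x])
  finally show ?thesis
    using gfun_le_max[OF \<open>open U\<close> x, of F] G[OF x] Fmax Phi_zj bumps by linarith
qed

theorem mainTheorem5:
  fixes n :: nat and a b :: real and z :: "int \<Rightarrow> real" and F :: "real \<Rightarrow> real"
  assumes "a < b"
    and "n_close n z a b"
    and "zigzag n z a b F"
  shows "(\<forall>i. \<bar>F (z i) - F (z (i+1))\<bar> \<ge> 2^n * \<bar>z i - z (i+1)\<bar>) \<and>
    (\<forall>(U::real set) (J::'j set) (aa::'j \<Rightarrow> real) (bb::'j \<Rightarrow> real) (G::real \<Rightarrow> real).
        open U \<and> U \<subseteq> {a<..<b} \<and>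
        U = (\<Union>i\<in>J. {aa i<..<bb i}) \<and> (\<forall>i\<in>J. aa i < bb i) \<and>
        (\<forall>i\<in>J. \<forall>k\<in>J. i \<noteq> k \<longrightarrow> {aa i<..<bb i} \<inter> {aa k<..<bb k} = {}) \<and>
        (\<forall>i. trim_in U (z i) (z (i+1))) \<and>
        G a = F a \<and> G b = F a \<and>
        (\<forall>i. \<forall>x\<in>{z i..z (i+1)}. G x = gfun F (z i) (z (i+1)) U x)
      \<longrightarrow> (\<forall>x\<in>{a..b}. G x + (\<Sum>\<^sub>\<infinity>i\<in>J. Phi n (aa i) (bb i) x) \<le> G a + 2 * Phi n a b x))"
proof (intro conjI allI impI ballI)
  show "2^n * \<bar>z i - z (i + 1)\<bar> \<le> \<bar>F (z i) - F (z (i + 1))\<bar>" for i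
    by (rule zigzag_slope_bound[OF assms(2,3)])
next
  fix U :: "real set" and J :: "'j set" and aa bb :: "'j \<Rightarrow> real" and G :: "real \<Rightarrow> real" and x
  assume H: "open U \<and> U \<subseteq> {a<..<b} \<and> U = (\<Union>i\<in>J. {aa i<..<bb i}) \<and> (\<forall>i\<in>J. aa i < bb i) \<and>
      (\<forall>i\<in>J. \<forall>k\<in>J. i \<noteq> k \<longrightarrow> {aa i<..<bb i} \<inter> {aa k<..<bb k} = {}) \<and>
      (\<forall>i. trim_in U (z i) (z (i+1))) \<and> G a = F a \<and> G b = F a \<and>
      (\<forall>i. \<forall>x\<in>{z i..z (i+1)}. G x = gfun F (z i) (z (i+1)) U x)"
    and x: "x \<in> {a..b}"
  from H have opn: "open U" and sub: "U \<subseteq> {a<..<b}" and U: "U = (\<Union>i\<in>J. {aa i<..<bb i})"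
    and disj: "\<forall>i\<in>J. \<forall>k\<in>J. i \<noteq> k \<longrightarrow> {aa i<..<bb i} \<inter> {aa k<..<bb k} = {}"
    and trim: "\<forall>i. trim_in U (z i) (z (i+1))" and Ga: "G a = F a"
    and G: "\<forall>i. \<forall>x\<in>{z i..z (i+1)}. G x = gfun F (z i) (z (i+1)) U x"
    by blast+
  show "G x + (\<Sum>\<^sub>\<infinity>i\<in>J. Phi n (aa i) (bb i) x) \<le> G a + 2 * Phi n a b x"
  proof (cases "x \<in> {a<..<b}")
    case True
    then obtain i where xi: "x \<in> {z i..z (i + 1)}"
      using n_close_covers[OF assms(2)] by (meson atLeastLessThan_iff atLeastAtMost_iff less_imp_le)
    have "G x + (\<Sum>\<^sub>\<infinity>i\<in>J. Phi n (aa i) (bb i) x) \<le> F a + 2 * Phi n a b x"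
      by (rule gfun_plus_bumps_le_twice_Phi[OF assms(2,3) opn U]) (use disj trim G xi in blast)+
    then show ?thesis using Ga by simp
  next
    case False
    then have "x \<notin> U" "x = a \<or> x = b" using sub x by auto
    with U have "(\<Sum>\<^sub>\<infinity>i\<in>J. Phi n (aa i) (bb i) x) = 0"
      by (intro infsum_0 Phi_eq_0_outside) blast
    then show ?thesis using \<open>x = a \<or> x = b\<close> H by (auto simp: Phi_def)
  qed
qed

end
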